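(* For every $\varepsilon>0$, every locally $\varepsilon$-balanced $2$-edge-coloured $K_n$ contains at least $\varepsilon^4n^4/10^5$ copies of $P_3^{\circ}$, $C_4$ or $\overline{C_4}$ (counted together).
   Context: Colours are red and blue. A $2$-edge-coloured $K_n$ is locally $\varepsilon$-balanced if every vertex is incident to at least $\varepsilon n$ red and at least $\varepsilon n$ blue edges. $C_4$ is the $2$-edge-coloured $K_4$ whose red edges form a $4$-cycle (the other two edges blue); $\overline{C_4}$ is $C_4$ with colours swapped. $P_3^{\circ}$ is the $2$-edge-coloured $K_4$ on vertices $1,2,3,4$ in which the edges $12,23,34$ are blue and the edges $13,14,24$ are red. A copy of a coloured graph $H$ in a coloured graph $G$ is an injection of $V(H)$ into $V(G)$ mapping each edge of $H$ to an edge of $G$ of the same colour. *)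

theory Defs
  imports Complex_Main "HOL-Library.FuncSet"
begin

text \<open>A 2-edge-coloured complete graph K_n: a finite vertex set V (n = card V) and a
  symmetric predicate red; for distinct u v in V the edge uv is red iff red u v, blue otherwise.\<close>

definition edge_colouring :: "'a set \<Rightarrow> ('a \<Rightarrow> 'a \<Rightarrow> bool) \<Rightarrow> bool" where
  "edge_colouring V red \<longleftrightarrow> finite V \<and> (\<forall>u\<in>V. \<forall>v\<in>V. red u v = red v u)"

definition red_deg :: "'a set \<Rightarrow> ('a \<Rightarrow> 'a \<Rightarrow> bool) \<Rightarrow> 'a \<Rightarrow> nat" where
  "red_deg V red v = card {u \<in> V. u \<noteq> v \<and> red v u}"

definition blue_deg :: "'a set \<Rightarrow> ('a \<Rightarrow> 'a \<Rightarrow> bool) \<Rightarrow> 'a \<Rightarrow> nat" where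
  "blue_deg V red v = card {u \<in> V. u \<noteq> v \<and> \<not> red v u}"

definition locally_balanced :: "real \<Rightarrow> 'a set \<Rightarrow> ('a \<Rightarrow> 'a \<Rightarrow> bool) \<Rightarrow> bool" where
  "locally_balanced \<epsilon> V red \<longleftrightarrow>
     (\<forall>v\<in>V. real (red_deg V red v) \<ge> \<epsilon> * real (card V) \<and>
            real (blue_deg V red v) \<ge> \<epsilon> * real (card V))"

text \<open>Coloured K_4 patterns on vertices 0,1,2,3 (paper's 1,2,3,4); value True = red.\<close>

definition P3o :: "nat \<Rightarrow> nat \<Rightarrow> bool" where
  "P3o i j \<longleftrightarrow> {i, j} \<in> {{0,2}, {0,3}, {1,3}}"

definition C4 :: "nat \<Rightarrow> nat \<Rightarrow> bool" where
  "C4 i j \<longleftrightarrow> {i, j} \<in> {{0,1}, {1,2}, {2,3}, {3,0}}"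

definition C4bar :: "nat \<Rightarrow> nat \<Rightarrow> bool" where
  "C4bar i j \<longleftrightarrow> \<not> C4 i j"

definition copies :: "(nat \<Rightarrow> nat \<Rightarrow> bool) \<Rightarrow> 'a set \<Rightarrow> ('a \<Rightarrow> 'a \<Rightarrow> bool) \<Rightarrow> (nat \<Rightarrow> 'a) set" where
  "copies H V red = {f \<in> {0..<4} \<rightarrow>\<^sub>E V. inj_on f {0..<4} \<and>
      (\<forall>i<4. \<forall>j<4. i \<noteq> j \<longrightarrow> red (f i) (f j) = H i j)}"

end

theory Submission
  imports Defs
begin

text \<open>
  Call (x, y, u, w) an alternating 4-cycle if xu and yw are red while uy and wx are blue.
  Whatever the colours of the diagonals xy and uw, its vertices span a copy of C4, of its
  complement or of P3o, and within each of the four colour classes of the diagonals distinct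
  cycles give distinct copies. So it suffices to find many alternating 4-cycles when all red
  and blue degrees are at least k = \<epsilon>n.

  For k < 16 a single cycle suffices: take y of maximal red degree, a blue neighbour u of y and
  a red neighbour x of u; as x has at most the red degree of y, some w is red to y and blue to x.
  For k \<ge> 16 let H be the \<lfloor>k/8\<rfloor> vertices of largest red degree and write N(v) for the red
  neighbourhood of v. If some y \<in> H has a blue neighbourhood Q with
  \<Sum> |N(u) \<inter> N(u')| < |Q|^2 k/4 over pairs u \<noteq> u' in Q, then any two u, u' \<in> Q have at least
  k - 1 - |N(u) \<inter> N(u')| red neighbours each that are blue to the other, and summing over pairs
  in Q gives k^4/128 cycles. Otherwise double counting gives, for every y \<in> H,
  \<Sum> |N(x) \<inter> Q|^2 \<ge> |Q|^2 k/4 over all x, at least half of it from x \<notin> H; such x have red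
  degree at most that of y, so |N(x) \<inter> Q|^2 cycles have diagonal xy, and summing over y \<in> H
  again gives k^4/128.
\<close>

definition K4_map :: "'a \<Rightarrow> 'a \<Rightarrow> 'a \<Rightarrow> 'a \<Rightarrow> nat \<Rightarrow> 'a" where
  "K4_map a b c d = (\<lambda>i. if i = 0 then a else if i = 1 then b else if i = 2 then c
      else if i = 3 then d else undefined)"

lemma K4_map_simps [simp]:
  "K4_map a b c d 0 = a" "K4_map a b c d 1 = b" "K4_map a b c d (Suc 0) = b"
  "K4_map a b c d 2 = c" "K4_map a b c d 3 = d"
  by (simp_all add: K4_map_def)

lemma K4_map_inject:
  assumes "K4_map a b c d = K4_map a' b' c' d'"
  shows "a = a' \<and> b = b' \<and> c = c' \<and> d = d'"
  using fun_cong[OF assms, of 0] fun_cong[OF assms, of 1] fun_cong[OF assms, of 2]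
    fun_cong[OF assms, of 3]
  by simp

lemma P3o_commute: "P3o i j = P3o j i"
  by (simp add: P3o_def insert_commute)

lemma C4_commute: "C4 i j = C4 j i"
  by (simp add: C4_def insert_commute)

lemma C4bar_commute: "C4bar i j = C4bar j i"
  by (simp add: C4bar_def C4_commute)

lemma exists_top_subset:
  fixes f :: "'a \<Rightarrow> 'b::linorder"
  assumes "finite V" and "h \<le> card V"
  obtains H where "H \<subseteq> V" "card H = h" "\<And>y x. y \<in> H \<Longrightarrow> x \<in> V - H \<Longrightarrow> f x \<le> f y"
proof -
  have "\<exists>H\<subseteq>V. card H = h \<and> (\<forall>y\<in>H. \<forall>x\<in>V - H. f x \<le> f y)"
    using assms(2)
  proof (induction h)
    case 0
    show ?case by auto
  next
    case (Suc h)
    then obtain H where H: "H \<subseteq> V" "card H = h" "\<forall>y\<in>H. \<forall>x\<in>V - H. f x \<le> f y"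
      by auto
    have "V - H \<noteq> {}"
    proof
      assume "V - H = {}"
      then have "V = H"
        using H(1) by blast
      then show False
        using H(2) Suc.prems by simp
    qed
    moreover have "finite (V - H)"
      using assms(1) by simp
    ultimately have "Max (f ` (V - H)) \<in> f ` (V - H)"
      by (intro Max_in) auto
    then obtain y where y: "y \<in> V - H" "f y = Max (f ` (V - H))"
      by auto
    have "f x \<le> f y" if "x \<in> V - H" for x
      using y(2) that \<open>finite (V - H)\<close> by simp
    then show ?case
      using y(1) H finite_subset[OF H(1) assms(1)] by (intro exI[of _ "insert y H"]) auto
  qed
  then show ?thesis
    using that by blast
qed

lemma square_minus_twice_mult_le_mult:
  fixes a c p r :: real
  assumes "0 \<le> a" "0 \<le> c" "0 \<le> p" "0 \<le> r" "a - c \<le> p" "a - c \<le> r"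
  shows "a^2 - 2*a*c \<le> p*r"
proof (cases "a \<le> c")
  case True
  then have "a * a \<le> a * c"
    using assms(1) by (rule mult_left_mono)
  then have "a^2 - 2*a*c \<le> 0"
    using mult_nonneg_nonneg[OF assms(1,2)] by (simp add: power2_eq_square)
  then show ?thesis
    using assms(3,4) by (meson mult_nonneg_nonneg order_trans)
next
  case False
  then have "(a - c) * (a - c) \<le> p * r"
    using assms by (intro mult_mono) auto
  moreover have "a^2 - 2*a*c \<le> (a - c) * (a - c)"
    by (simp add: power2_eq_square algebra_simps)
  ultimately show ?thesis
    by linarith
qed

lemma sum_distinct_pairs_affine:
  fixes f :: "'a \<Rightarrow> 'a \<Rightarrow> real"
  assumes "finite Q"
  shows "(\<Sum>u\<in>Q. \<Sum>u'\<in>Q - {u}. a - b * f u u')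
    = real (card Q) * (real (card Q) - 1) * a - b * (\<Sum>u\<in>Q. \<Sum>u'\<in>Q - {u}. f u u')"
proof -
  have "(\<Sum>u'\<in>Q - {u}. a - b * f u u') = (real (card Q) - 1) * a - b * (\<Sum>u'\<in>Q - {u}. f u u')"
    if "u \<in> Q" for u
  proof -
    have "card Q \<ge> 1"
      using that assms by (metis One_nat_def Suc_leI card_gt_0_iff empty_iff)
    then have "real (card (Q - {u})) = real (card Q) - 1"
      using that assms by (simp add: of_nat_diff)
    then show ?thesis
      by (simp add: sum_subtractf sum_distrib_left)
  qed
  then have "(\<Sum>u\<in>Q. \<Sum>u'\<in>Q - {u}. a - b * f u u')
      = (\<Sum>u\<in>Q. (real (card Q) - 1) * a - b * (\<Sum>u'\<in>Q - {u}. f u u'))"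
    by (rule sum.cong[OF refl])
  then show ?thesis
    by (simp add: sum_subtractf sum_distrib_left)
qed

locale two_colouring =
  fixes V :: "'a set" and red :: "'a \<Rightarrow> 'a \<Rightarrow> bool"
  assumes colouring: "edge_colouring V red"
begin

lemma finite_V: "finite V"
  using colouring by (simp add: edge_colouring_def)

lemma red_commute: "u \<in> V \<Longrightarrow> v \<in> V \<Longrightarrow> red u v = red v u"
  using colouring by (simp add: edge_colouring_def)

definition red_nbrs :: "'a \<Rightarrow> 'a set" where
  "red_nbrs v = {u \<in> V. u \<noteq> v \<and> red v u}"

definition blue_nbrs :: "'a \<Rightarrow> 'a set" where
  "blue_nbrs v = {u \<in> V. u \<noteq> v \<and> \<not> red v u}"

definition red_blue_nbrs :: "'a \<Rightarrow> 'a \<Rightarrow> 'a set" where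
  "red_blue_nbrs x y = red_nbrs x \<inter> blue_nbrs y"

definition red_codegree :: "'a \<Rightarrow> 'a \<Rightarrow> nat" where
  "red_codegree u v = card (red_nbrs u \<inter> red_nbrs v)"

text \<open>A quadruple (x, y, u, w) stands for the 4-cycle x u y w with red edges xu, yw and blue
  edges uy, wx.\<close>

definition alternating_cycles :: "('a \<times> 'a \<times> 'a \<times> 'a) set" where
  "alternating_cycles = (SIGMA x:V. SIGMA y:V - {x}. red_blue_nbrs x y \<times> red_blue_nbrs y x)"

definition cycles_on_diagonal :: "'a \<Rightarrow> 'a \<Rightarrow> nat" where
  "cycles_on_diagonal x y = card (red_blue_nbrs x y) * card (red_blue_nbrs y x)"

lemma red_nbrs_subset: "red_nbrs v \<subseteq> V"
  by (auto simp: red_nbrs_def)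

lemma blue_nbrs_subset: "blue_nbrs v \<subseteq> V"
  by (auto simp: blue_nbrs_def)

lemma finite_red_nbrs: "finite (red_nbrs v)"
  using finite_subset[OF red_nbrs_subset finite_V] .

lemma finite_blue_nbrs: "finite (blue_nbrs v)"
  using finite_subset[OF blue_nbrs_subset finite_V] .

lemma finite_red_blue_nbrs: "finite (red_blue_nbrs x y)"
  by (simp add: red_blue_nbrs_def finite_red_nbrs)

lemma card_red_nbrs: "card (red_nbrs v) = red_deg V red v"
  by (simp add: red_nbrs_def red_deg_def)

lemma card_blue_nbrs: "card (blue_nbrs v) = blue_deg V red v"
  by (simp add: blue_nbrs_def blue_deg_def)

lemma finite_alternating_cycles: "finite alternating_cycles"
  by (auto simp: alternating_cycles_def finite_V finite_red_blue_nbrs)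

lemma not_mem_red_nbrs_self [simp]: "v \<notin> red_nbrs v"
  by (simp add: red_nbrs_def)

lemma not_mem_blue_nbrs_self [simp]: "v \<notin> blue_nbrs v"
  by (simp add: blue_nbrs_def)

lemma red_nbrs_commute: "x \<in> V \<Longrightarrow> u \<in> V \<Longrightarrow> u \<in> red_nbrs x \<longleftrightarrow> x \<in> red_nbrs u"
  by (auto simp: red_nbrs_def red_commute)

lemma alternating_cyclesD:
  assumes "(x, y, u, w) \<in> alternating_cycles"
  shows "x \<in> V" "y \<in> V" "u \<in> V" "w \<in> V" "distinct [x, y, u, w]"
    and "red x u" "red y w" "\<not> red y u" "\<not> red x w"
  using assms by (auto simp: alternating_cycles_def red_blue_nbrs_def red_nbrs_def blue_nbrs_def)

lemma K4_map_in_copies: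
  assumes "a \<in> V" "b \<in> V" "c \<in> V" "d \<in> V" "distinct [a, b, c, d]"
    and "\<And>i j. H i j = H j i"
    and "red a b = H 0 1" "red a c = H 0 2" "red a d = H 0 3"
    and "red b c = H 1 2" "red b d = H 1 3" "red c d = H 2 3"
  shows "K4_map a b c d \<in> copies H V red"
proof -
  have less_4_cases: "i < 4 \<longleftrightarrow> i = 0 \<or> i = 1 \<or> i = 2 \<or> i = 3" for i :: nat
    by auto
  have "K4_map a b c d \<in> {0..<4} \<rightarrow>\<^sub>E V"
    using assms(1-4) by (auto simp: K4_map_def PiE_def extensional_def)
  moreover have "inj_on (K4_map a b c d) {0..<4}"
    using assms(5) by (auto simp: inj_on_def less_4_cases)
  moreover have "red (K4_map a b c d i) (K4_map a b c d j) = H i j"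
    if "i < 4" "j < 4" "i \<noteq> j" for i j
  proof -
    have ordered: "red (K4_map a b c d i) (K4_map a b c d j) = H i j" if "i < j" "j < 4" for i j
    proof -
      have "(i, j) \<in> {(0, 1), (0, 2), (0, 3), (1, 2), (1, 3), (2, 3)}"
        using that by (auto simp: less_4_cases)
      then show ?thesis
        by (auto simp: assms(7-))
    qed
    have "K4_map a b c d i \<in> V" "K4_map a b c d j \<in> V"
      using \<open>i < 4\<close> \<open>j < 4\<close> assms(1-4) by (auto simp: less_4_cases)
    then show ?thesis
      using ordered[of i j] ordered[of j i] that red_commute assms(6)[of i j] by fastforce
  qed
  ultimately show ?thesis
    unfolding copies_def by blast
qed

lemma alternating_cycle_in_copies:
  assumes "(x, y, u, w) \<in> alternating_cycles"
  shows "red x y \<Longrightarrow> red u w \<Longrightarrow> K4_map x u w y \<in> copies C4 V red"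
    and "\<not> red x y \<Longrightarrow> \<not> red u w \<Longrightarrow> K4_map x y u w \<in> copies C4bar V red"
    and "red x y \<Longrightarrow> \<not> red u w \<Longrightarrow> K4_map x w u y \<in> copies P3o V red"
    and "\<not> red x y \<Longrightarrow> red u w \<Longrightarrow> K4_map u y x w \<in> copies P3o V red"
proof -
  note cycle = alternating_cyclesD[OF assms]
  have sym: "red u x" "red w y" "\<not> red u y" "\<not> red w x" "red y x = red x y" "red w u = red u w"
    using cycle red_commute by metis+
  show "red x y \<Longrightarrow> red u w \<Longrightarrow> K4_map x u w y \<in> copies C4 V red"
    by (rule K4_map_in_copies) (use cycle sym in \<open>auto simp: C4_commute C4_def doubleton_eq_iff\<close>)
  show "\<not> red x y \<Longrightarrow> \<not> red u w \<Longrightarrow> K4_map x y u w \<in> copies C4bar V red"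
    by (rule K4_map_in_copies)
      (use cycle sym in \<open>auto simp: C4bar_commute C4bar_def C4_def doubleton_eq_iff\<close>)
  show "red x y \<Longrightarrow> \<not> red u w \<Longrightarrow> K4_map x w u y \<in> copies P3o V red"
    by (rule K4_map_in_copies) (use cycle sym in \<open>auto simp: P3o_commute P3o_def doubleton_eq_iff\<close>)
  show "\<not> red x y \<Longrightarrow> red u w \<Longrightarrow> K4_map u y x w \<in> copies P3o V red"
    by (rule K4_map_in_copies) (use cycle sym in \<open>auto simp: P3o_commute P3o_def doubleton_eq_iff\<close>)
qed

lemma card_filter_alternating_cycles_le:
  assumes "inj_on g alternating_cycles"
    and "\<And>x y u w. (x, y, u, w) \<in> alternating_cycles \<Longrightarrow> P x y u w
      \<Longrightarrow> g (x, y, u, w) \<in> copies H V red"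
  shows "card {(x, y, u, w) \<in> alternating_cycles. P x y u w} \<le> card (copies H V red)"
proof (rule card_inj_on_le)
  show "inj_on g {(x, y, u, w) \<in> alternating_cycles. P x y u w}"
    using assms(1) by (rule inj_on_subset) blast
  show "g ` {(x, y, u, w) \<in> alternating_cycles. P x y u w} \<subseteq> copies H V red"
    using assms(2) by blast
  show "finite (copies H V red)"
    by (rule finite_subset[of _ "{0..<4} \<rightarrow>\<^sub>E V"]) (auto simp: copies_def finite_V finite_PiE)
qed

lemma card_alternating_cycles_le_copies:
  "card alternating_cycles
     \<le> 2 * card (copies P3o V red) + card (copies C4 V red) + card (copies C4bar V red)"
proof -
  define with_diagonals where
    "with_diagonals b b' = {(x, y, u, w) \<in> alternating_cycles. red x y = b \<and> red u w = b'}" for b b'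
  have partition: "alternating_cycles = with_diagonals True True \<union> with_diagonals False False
      \<union> with_diagonals True False \<union> with_diagonals False True"
    by (auto simp: with_diagonals_def)
  have "card alternating_cycles \<le> card (with_diagonals True True) + card (with_diagonals False False)
      + card (with_diagonals True False) + card (with_diagonals False True)"
    unfolding partition
    using card_Un_le[of "with_diagonals True True \<union> with_diagonals False False \<union> with_diagonals True False"
        "with_diagonals False True"]
      card_Un_le[of "with_diagonals True True \<union> with_diagonals False False" "with_diagonals True False"]
      card_Un_le[of "with_diagonals True True" "with_diagonals False False"]
    by linarith
  moreover have "card (with_diagonals True True) \<le> card (copies C4 V red)"
    unfolding with_diagonals_def
    by (rule card_filter_alternating_cycles_le[where g = "\<lambda>(x, y, u, w). K4_map x u w y"])
      (auto simp: inj_on_def dest: K4_map_inject intro: alternating_cycle_in_copies)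
  moreover have "card (with_diagonals False False) \<le> card (copies C4bar V red)"
    unfolding with_diagonals_def
    by (rule card_filter_alternating_cycles_le[where g = "\<lambda>(x, y, u, w). K4_map x y u w"])
      (auto simp: inj_on_def dest: K4_map_inject intro: alternating_cycle_in_copies)
  moreover have "card (with_diagonals True False) \<le> card (copies P3o V red)"
    unfolding with_diagonals_def
    by (rule card_filter_alternating_cycles_le[where g = "\<lambda>(x, y, u, w). K4_map x w u y"])
      (auto simp: inj_on_def dest: K4_map_inject intro: alternating_cycle_in_copies)
  moreover have "card (with_diagonals False True) \<le> card (copies P3o V red)"
    unfolding with_diagonals_def
    by (rule card_filter_alternating_cycles_le[where g = "\<lambda>(x, y, u, w). K4_map u y x w"])
      (auto simp: inj_on_def dest: K4_map_inject intro: alternating_cycle_in_copies)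
  ultimately show ?thesis
    by linarith
qed

lemma card_alternating_cycles:
  "card alternating_cycles = (\<Sum>x\<in>V. \<Sum>y\<in>V - {x}. cycles_on_diagonal x y)"
  unfolding alternating_cycles_def cycles_on_diagonal_def
  by (simp add: card_SigmaI finite_V finite_red_blue_nbrs card_cartesian_product)

lemma sum_le_card_alternating_cycles:
  assumes "A \<subseteq> V" and "\<And>x. x \<in> A \<Longrightarrow> B x \<subseteq> V - {x}"
  shows "(\<Sum>x\<in>A. \<Sum>y\<in>B x. real (cycles_on_diagonal x y))
    \<le> real (card alternating_cycles)"
proof -
  have "(\<Sum>x\<in>A. \<Sum>y\<in>B x. real (cycles_on_diagonal x y))
      \<le> (\<Sum>x\<in>A. \<Sum>y\<in>V - {x}. real (cycles_on_diagonal x y))"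
    using assms(2) by (intro sum_mono sum_mono2) (auto simp: finite_V)
  also have "\<dots> \<le> (\<Sum>x\<in>V. \<Sum>y\<in>V - {x}. real (cycles_on_diagonal x y))"
    using assms(1) by (intro sum_mono2) (auto simp: finite_V intro: sum_nonneg)
  also have "\<dots> = real (card alternating_cycles)"
    by (simp add: card_alternating_cycles)
  finally show ?thesis .
qed

lemma card_red_nbrs_split:
  assumes "x \<in> V" "y \<in> V" "x \<noteq> y"
  shows "card (red_nbrs x) = card (red_blue_nbrs x y) + red_codegree x y + of_bool (red x y)"
proof -
  have split: "red_nbrs x
      = (red_blue_nbrs x y \<union> (red_nbrs x \<inter> red_nbrs y)) \<union> (if red x y then {y} else {})"
    using assms by (auto simp: red_blue_nbrs_def red_nbrs_def blue_nbrs_def)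
  have disjoint: "red_blue_nbrs x y \<inter> red_nbrs y = {}"
    by (auto simp: red_blue_nbrs_def red_nbrs_def blue_nbrs_def)
  have "card (red_nbrs x) = card (red_blue_nbrs x y \<union> (red_nbrs x \<inter> red_nbrs y))
      + card (if red x y then {y} else {})"
    unfolding arg_cong[where f = card, OF split]
    by (rule card_Un_disjoint) (auto simp: finite_red_blue_nbrs finite_red_nbrs red_blue_nbrs_def)
  also have "card (red_blue_nbrs x y \<union> (red_nbrs x \<inter> red_nbrs y))
      = card (red_blue_nbrs x y) + red_codegree x y"
    unfolding red_codegree_def
    by (rule card_Un_disjoint) (use disjoint in \<open>auto simp: finite_red_blue_nbrs finite_red_nbrs\<close>)
  finally show ?thesis
    by simp
qed

lemma card_red_blue_nbrs_le_swap:
  assumes "x \<in> V" "y \<in> V" "x \<noteq> y" and "card (red_nbrs x) \<le> card (red_nbrs y)"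
  shows "card (red_blue_nbrs x y) \<le> card (red_blue_nbrs y x)"
  using assms card_red_nbrs_split[of x y] card_red_nbrs_split[of y x]
  by (simp add: red_codegree_def red_commute Int_commute)

lemma square_card_red_blue_nbrs_le_cycles_on_diagonal:
  assumes "x \<in> V" "y \<in> V" "x \<noteq> y" and "card (red_nbrs x) \<le> card (red_nbrs y)"
  shows "real (card (red_blue_nbrs x y))^2 \<le> real (cycles_on_diagonal x y)"
  using card_red_blue_nbrs_le_swap[OF assms]
  by (simp add: cycles_on_diagonal_def power2_eq_square mult_left_mono)

lemma sum_card_red_nbrs_Int_square:
  assumes "Q \<subseteq> V"
  shows "(\<Sum>x\<in>V. card (red_nbrs x \<inter> Q)^2) = (\<Sum>u\<in>Q. \<Sum>u'\<in>Q. red_codegree u u')"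
proof -
  have Q: "finite Q"
    using finite_subset[OF assms finite_V] .
  have "card (red_nbrs x \<inter> Q) = (\<Sum>u\<in>Q. of_bool (x \<in> red_nbrs u))" if "x \<in> V" for x
  proof -
    have "Q \<inter> {u. x \<in> red_nbrs u} = red_nbrs x \<inter> Q"
      using assms that red_nbrs_commute by blast
    then show ?thesis
      using Q by simp
  qed
  then have "(\<Sum>x\<in>V. card (red_nbrs x \<inter> Q)^2)
      = (\<Sum>x\<in>V. \<Sum>u\<in>Q. \<Sum>u'\<in>Q. of_bool (x \<in> red_nbrs u) * of_bool (x \<in> red_nbrs u'))"
    by (simp add: power2_eq_square sum_product)
  also have "\<dots> = (\<Sum>u\<in>Q. \<Sum>u'\<in>Q. \<Sum>x\<in>V. of_bool (x \<in> red_nbrs u) * of_bool (x \<in> red_nbrs u'))"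
    by (subst sum.swap) (rule sum.cong[OF refl], rule sum.swap)
  also have "\<dots> = (\<Sum>u\<in>Q. \<Sum>u'\<in>Q. red_codegree u u')"
  proof (intro sum.cong refl)
    fix u u'
    have "V \<inter> red_nbrs u \<inter> red_nbrs u' = red_nbrs u \<inter> red_nbrs u'"
      using red_nbrs_subset by blast
    then show "(\<Sum>x\<in>V. of_bool (x \<in> red_nbrs u) * of_bool (x \<in> red_nbrs u')) = red_codegree u u'"
      by (simp add: finite_V red_codegree_def)
  qed
  finally show ?thesis .
qed

definition red_codegree_sum :: "'a set \<Rightarrow> real" where
  "red_codegree_sum Q = (\<Sum>u\<in>Q. \<Sum>u'\<in>Q - {u}. real (red_codegree u u'))"

end

locale min_degree_colouring = two_colouring +
  fixes k :: real
  assumes red_degree: "v \<in> V \<Longrightarrow> k \<le> card (red_nbrs v)"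
    and blue_degree: "v \<in> V \<Longrightarrow> k \<le> card (blue_nbrs v)"
begin

lemma card_alternating_cycles_pos:
  assumes "0 < k" and "V \<noteq> {}"
  shows "0 < card alternating_cycles"
proof -
  have "1 \<le> card V"
    using assms(2) finite_V by (simp add: Suc_le_eq card_gt_0_iff)
  then obtain Y where Y: "Y \<subseteq> V" "card Y = 1"
      "\<And>y x. y \<in> Y \<Longrightarrow> x \<in> V - Y \<Longrightarrow> card (red_nbrs x) \<le> card (red_nbrs y)"
    using exists_top_subset[OF finite_V, where f = "\<lambda>v. card (red_nbrs v)"] by blast
  then obtain y where y: "Y = {y}"
    by (meson card_1_singletonE)
  have "y \<in> V"
    using Y(1) y by blast
  have nonempty: "red_nbrs v \<noteq> {}" "blue_nbrs v \<noteq> {}" if "v \<in> V" for v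
    using red_degree[OF that] blue_degree[OF that] assms(1) by auto
  obtain u where u: "u \<in> blue_nbrs y"
    using nonempty(2)[OF \<open>y \<in> V\<close>] by blast
  then have "u \<in> V"
    using blue_nbrs_subset by blast
  then obtain x where x: "x \<in> red_nbrs u"
    using nonempty(1) by blast
  then have "x \<in> V" "u \<in> red_nbrs x"
    using red_nbrs_subset red_nbrs_commute \<open>u \<in> V\<close> by blast+
  then have "u \<in> red_blue_nbrs x y"
    using u by (simp add: red_blue_nbrs_def)
  moreover have "x \<noteq> y"
    using \<open>u \<in> red_nbrs x\<close> u by (auto simp: red_nbrs_def blue_nbrs_def)
  moreover have "card (red_blue_nbrs x y) \<le> card (red_blue_nbrs y x)"
    using \<open>x \<in> V\<close> \<open>y \<in> V\<close> \<open>x \<noteq> y\<close> Y(3) y by (intro card_red_blue_nbrs_le_swap) auto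
  ultimately obtain w where "w \<in> red_blue_nbrs y x"
    using finite_red_blue_nbrs by fastforce
  then have "(x, y, u, w) \<in> alternating_cycles"
    using \<open>x \<in> V\<close> \<open>y \<in> V\<close> \<open>x \<noteq> y\<close> \<open>u \<in> red_blue_nbrs x y\<close>
    by (simp add: alternating_cycles_def)
  then show ?thesis
    using finite_alternating_cycles card_gt_0_iff by blast
qed

lemma cycles_on_diagonal_ge:
  assumes "1 \<le> k" "u \<in> V" "u' \<in> V" "u \<noteq> u'"
  shows "(k - 1)^2 - 2 * (k - 1) * red_codegree u u' \<le> cycles_on_diagonal u u'"
  unfolding cycles_on_diagonal_def of_nat_mult
proof (rule square_minus_twice_mult_le_mult)
  show "k - 1 - red_codegree u u' \<le> card (red_blue_nbrs u u')"
      "k - 1 - red_codegree u u' \<le> card (red_blue_nbrs u' u)"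
    using assms card_red_nbrs_split[of u u'] card_red_nbrs_split[of u' u] red_degree[of u] red_degree[of u']
    by (auto simp: red_codegree_def Int_commute of_bool_def split: if_splits)
qed (use assms(1) in auto)

lemma card_alternating_cycles_ge_if_few_codegrees:
  assumes "16 \<le> k" "Q \<subseteq> V" "k \<le> card Q"
    and few: "red_codegree_sum Q < real (card Q)^2 * k / 4"
  shows "k^4 / 128 \<le> real (card alternating_cycles)"
proof -
  define q where "q = real (card Q)"
  define a where "a = k - 1"
  have "k \<le> q" "0 \<le> a" "k / 2 \<le> a"
    using assms(1,3) by (simp_all add: q_def a_def)
  have "k^4 / 128 \<le> k * (k / 2) * (k * (3 * k / 8))"
    using assms(1) by (simp add: power4_eq_xxxx)
  also have "\<dots> \<le> q * a * (q * (3 * k / 8))"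
    using \<open>k \<le> q\<close> \<open>k / 2 \<le> a\<close> assms(1) by (intro mult_mono) auto
  also have "\<dots> \<le> q * a * ((q - 1) * a - q * k / 2)"
  proof (rule mult_left_mono)
    have "16 * q \<le> k * q"
      using assms(1) \<open>k \<le> q\<close> by (intro mult_right_mono) auto
    then show "q * (3 * k / 8) \<le> (q - 1) * a - q * k / 2"
      using \<open>k \<le> q\<close> by (simp add: a_def algebra_simps)
  qed (use \<open>k \<le> q\<close> \<open>0 \<le> a\<close> assms(1) in auto)
  also have "\<dots> = q * (q - 1) * a^2 - 2 * a * (q^2 * k / 4)"
    by (simp add: power2_eq_square algebra_simps)
  also have "\<dots> \<le> q * (q - 1) * a^2 - 2 * a * red_codegree_sum Q"
    using mult_left_mono[OF less_imp_le[OF few] \<open>0 \<le> a\<close>] by (simp add: q_def algebra_simps)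
  also have "\<dots> = (\<Sum>u\<in>Q. \<Sum>u'\<in>Q - {u}. a^2 - 2 * a * red_codegree u u')"
    using finite_subset[OF assms(2) finite_V]
    by (simp add: sum_distinct_pairs_affine red_codegree_sum_def q_def)
  also have "\<dots> \<le> (\<Sum>u\<in>Q. \<Sum>u'\<in>Q - {u}. real (cycles_on_diagonal u u'))"
    unfolding a_def using assms(1,2) by (intro sum_mono cycles_on_diagonal_ge) auto
  also have "\<dots> \<le> real (card alternating_cycles)"
    using assms(2) by (intro sum_le_card_alternating_cycles) auto
  finally show ?thesis .
qed

lemma sum_cycles_on_diagonal_ge_if_many_codegrees:
  assumes "0 \<le> k" "H \<subseteq> V" "card H \<le> k / 8" "y \<in> H"
    and top: "\<And>x. x \<in> V - H \<Longrightarrow> card (red_nbrs x) \<le> card (red_nbrs y)"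
    and many: "real (card (blue_nbrs y))^2 * k / 4 \<le> red_codegree_sum (blue_nbrs y)"
  shows "k^3 / 8 \<le> (\<Sum>x\<in>V - H. real (cycles_on_diagonal x y))"
proof -
  define Q where "Q = blue_nbrs y"
  define q where "q = real (card Q)"
  define g where "g x = real (card (red_blue_nbrs x y))^2" for x
  have "y \<in> V"
    using assms(2,4) by blast
  then have "k \<le> q"
    using blue_degree by (simp add: q_def Q_def)
  have "finite Q"
    by (simp add: Q_def finite_blue_nbrs)
  have "red_codegree_sum Q \<le> (\<Sum>u\<in>Q. \<Sum>u'\<in>Q. real (red_codegree u u'))"
    unfolding red_codegree_sum_def using \<open>finite Q\<close> by (intro sum_mono sum_mono2) auto
  also have "\<dots> = (\<Sum>x\<in>V. g x)"
    using arg_cong[OF sum_card_red_nbrs_Int_square[OF blue_nbrs_subset, of y], of real]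
    by (simp add: g_def Q_def red_blue_nbrs_def)
  finally have "q^2 * k / 4 \<le> (\<Sum>x\<in>V. g x)"
    using many by (simp add: q_def Q_def)
  moreover have "(\<Sum>x\<in>V. g x) = (\<Sum>x\<in>V - H. g x) + (\<Sum>x\<in>H. g x)"
    by (rule sum.subset_diff[OF assms(2) finite_V])
  moreover have "(\<Sum>x\<in>H. g x) \<le> k / 8 * q^2"
  proof -
    have "g x \<le> q^2" for x
      unfolding g_def q_def Q_def red_blue_nbrs_def using \<open>finite Q\<close>
      by (simp add: Q_def card_mono)
    then have "(\<Sum>x\<in>H. g x) \<le> card H * q^2"
      using sum_bounded_above[of H g "q^2"] by simp
    also have "\<dots> \<le> k / 8 * q^2"
      using assms(3) by (intro mult_right_mono) auto
    finally show ?thesis .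
  qed
  moreover have "k^3 / 8 \<le> q^2 * k / 8"
    using \<open>k \<le> q\<close> assms(1) by (simp add: power3_eq_cube power2_eq_square mult_mono)
  moreover have "(\<Sum>x\<in>V - H. g x) \<le> (\<Sum>x\<in>V - H. real (cycles_on_diagonal x y))"
    unfolding g_def using \<open>y \<in> V\<close> assms(4) top
    by (intro sum_mono square_card_red_blue_nbrs_le_cycles_on_diagonal) auto
  ultimately show ?thesis
    by (simp add: field_simps)
qed

lemma card_alternating_cycles_ge_if_many_codegrees:
  assumes "0 \<le> k" "H \<subseteq> V" "k / 16 \<le> card H" "card H \<le> k / 8"
    and top: "\<And>y x. y \<in> H \<Longrightarrow> x \<in> V - H \<Longrightarrow> card (red_nbrs x) \<le> card (red_nbrs y)"
    and many: "\<And>y. y \<in> H \<Longrightarrow> real (card (blue_nbrs y))^2 * k / 4 \<le> red_codegree_sum (blue_nbrs y)"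
  shows "k^4 / 128 \<le> real (card alternating_cycles)"
proof -
  have "k^4 / 128 = k / 16 * (k^3 / 8)"
    by (simp add: power_numeral_reduce)
  also have "\<dots> \<le> card H * (k^3 / 8)"
    using assms(1,3) by (intro mult_right_mono) auto
  also have "\<dots> \<le> (\<Sum>y\<in>H. \<Sum>x\<in>V - H. real (cycles_on_diagonal x y))"
    using sum_mono[OF sum_cycles_on_diagonal_ge_if_many_codegrees[OF assms(1,2,4) _ top many]]
    by simp
  also have "\<dots> = (\<Sum>x\<in>V - H. \<Sum>y\<in>H. real (cycles_on_diagonal x y))"
    by (rule sum.swap)
  also have "\<dots> \<le> real (card alternating_cycles)"
    using assms(2) by (intro sum_le_card_alternating_cycles) auto
  finally show ?thesis .
qed

lemma card_alternating_cycles_ge: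
  assumes "16 \<le> k" and "V \<noteq> {}"
  shows "k^4 / 128 \<le> real (card alternating_cycles)"
proof -
  define h where "h = nat \<lfloor>k / 8\<rfloor>"
  have "0 \<le> \<lfloor>k / 8\<rfloor>"
    using assms(1) by simp
  then have "real h = of_int \<lfloor>k / 8\<rfloor>"
    by (simp add: h_def)
  then have "k / 16 \<le> h" "h \<le> k / 8"
    using assms(1) by linarith+
  obtain v where "v \<in> V"
    using assms(2) by blast
  then have "k \<le> card V"
    using red_degree[of v] card_mono[OF finite_V red_nbrs_subset, of v] by linarith
  then have "h \<le> card V"
    using \<open>h \<le> k / 8\<close> assms(1) by linarith
  then obtain H where H: "H \<subseteq> V" "card H = h"
      "\<And>y x. y \<in> H \<Longrightarrow> x \<in> V - H \<Longrightarrow> card (red_nbrs x) \<le> card (red_nbrs y)"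
    using exists_top_subset[OF finite_V, where f = "\<lambda>v. card (red_nbrs v)"] by blast
  show ?thesis
  proof (cases "\<exists>y\<in>H. red_codegree_sum (blue_nbrs y) < real (card (blue_nbrs y))^2 * k / 4")
    case True
    then obtain y where "y \<in> H" "red_codegree_sum (blue_nbrs y) < real (card (blue_nbrs y))^2 * k / 4"
      by blast
    moreover have "k \<le> card (blue_nbrs y)"
      using blue_degree \<open>y \<in> H\<close> H(1) by blast
    ultimately show ?thesis
      using assms(1) by (intro card_alternating_cycles_ge_if_few_codegrees[OF _ blue_nbrs_subset])
  next
    case False
    then show ?thesis
      using assms(1) H \<open>k / 16 \<le> h\<close> \<open>h \<le> k / 8\<close>
      by (intro card_alternating_cycles_ge_if_many_codegrees[of H]) (auto simp: not_less)
  qed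
qed

lemma card_copies_ge:
  assumes "0 < k" and "V \<noteq> {}"
  shows "k^4 / 10^5
    \<le> real (card (copies P3o V red) + card (copies C4 V red) + card (copies C4bar V red))"
proof -
  let ?copies = "card (copies P3o V red) + card (copies C4 V red) + card (copies C4bar V red)"
  have cycles: "card alternating_cycles \<le> 2 * ?copies"
    by (rule order_trans[OF card_alternating_cycles_le_copies]) simp
  show ?thesis
  proof (cases "k < 16")
    case True
    then have "k^4 < 16^4"
      using assms(1) by (intro power_strict_mono) auto
    moreover have "1 \<le> ?copies"
      using card_alternating_cycles_pos[OF assms] cycles by (cases ?copies) auto
    ultimately show ?thesis
      by simp
  next
    case False
    then have "k^4 / 128 \<le> card alternating_cycles"
      using assms(2) by (intro card_alternating_cycles_ge) auto
    then show ?thesis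
      using cycles by simp
  qed
qed

end

theorem proposition2p2:
  fixes V :: "'a set" and red :: "'a \<Rightarrow> 'a \<Rightarrow> bool" and \<epsilon> :: real
  assumes "\<epsilon> > 0"
    and "edge_colouring V red"
    and "locally_balanced \<epsilon> V red"
  shows "real (card (copies P3o V red) + card (copies C4 V red) + card (copies C4bar V red))
           \<ge> \<epsilon> ^ 4 * real (card V) ^ 4 / 10 ^ 5"
proof (cases "V = {}")
  case False
  define k where "k = \<epsilon> * real (card V)"
  interpret min_degree_colouring V red k
    using assms(2,3) unfolding k_def
    by unfold_locales
      (simp_all add: two_colouring.card_red_nbrs two_colouring.card_blue_nbrs two_colouring_def
        locally_balanced_def)
  have "0 < k"
    using assms(1) False finite_V by (simp add: k_def card_gt_0_iff)
  then show ?thesis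
    using card_copies_ge[OF _ False] by (simp add: k_def power_mult_distrib)
qed simp

end
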